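(* Let $n\geqslant 3$ and $N=2^n-1$. Let $\mathcal{A}_0$ be the set of $(\mathbf{x}';(z_h)_{1\leqslant h\leqslant N})$ with $x'_i\in\mathbb{Z}$, $z_h\in\mathbb{N}$ (positive integers) if $s(h)>1$ and $z_h\in\mathbb{Z}\smallsetminus\{0\}$ if $s(h)=1$, satisfying $$\sum_{i=1}^n x'_i\prod_{\substack{1\leqslant h\leqslant N,\ h\neq N\\ s(h)\geqslant 2}}z_h^{1-\varepsilon_i(h)}=0,$$ the coprimality condition $\gcd(z_N,x'_1z_1,x'_2z_2,\dots,x'_nz_{2^{n-1}})=1$, and such that $(z_h)$ is reduced. Then the map $$(\mathbf{x}';(z_h))\longmapsto\Big(z_1x'_1,\dots,z_{2^{n-1}}x'_n,\ \prod_h z_h^{\varepsilon_1(h)},\dots,\prod_h z_h^{\varepsilon_n(h)}\Big)$$ is a bijection from $\mathcal{A}_0$ onto the set of $(x_1,\dots,x_n,y_1,\dots,y_n)\in\mathbb{Z}^{2n}$ with $y_1\cdots y_n\neq 0$, $\sum_{i=1}^nx_i\prod_{j\neq i}y_j=0$ and $\gcd(x_1,\dots,x_n,y_1,\dots,y_n)=1$. Moreover, for elements $(\mathbf{x}';(z_h))$ satisfying the other conditions defining $\mathcal{A}_0$, the condition $\gcd(z_N,x'_1z_1,\dots,x'_nz_{2^{n-1}})=1$ is equivalent to $\gcd(x_1,\dots,x_n,y_1,\dots,y_n)=1$ for the image.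
   Context: For $h\in\{1,\dots,N\}$ write $h=\sum_j\varepsilon_j(h)2^{j-1}$ with $\varepsilon_j(h)\in\{0,1\}$ and $s(h)=\sum_j\varepsilon_j(h)$; $h\preceq\ell$ means $\varepsilon_j(h)\leqslant\varepsilon_j(\ell)$ for all $j$. The tuple $(z_h)$ is reduced if $\gcd(z_h,z_\ell)=1$ whenever $h,\ell$ are $\preceq$-incomparable. $z_{2^{j-1}}$ denotes the entry with index $h=2^{j-1}$. *)

theory Defs
  imports Main
begin

text \<open>Binary digits: h = sum_j eps j h * 2^(j-1), j >= 1.\<close>
definition eps :: "nat \<Rightarrow> nat \<Rightarrow> nat" where
  "eps j h = (h div 2 ^ (j - 1)) mod 2"

text \<open>Number of binary digits equal to 1 among the first n digits (for h <= 2^n - 1 this is s(h)).\<close>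
definition s :: "nat \<Rightarrow> nat \<Rightarrow> nat" where
  "s n h = (\<Sum>j\<in>{1..n}. eps j h)"

definition bprec :: "nat \<Rightarrow> nat \<Rightarrow> nat \<Rightarrow> bool" where
  "bprec n h l \<longleftrightarrow> (\<forall>j\<in>{1..n}. eps j h \<le> eps j l)"

definition reduced :: "nat \<Rightarrow> (nat \<Rightarrow> int) \<Rightarrow> bool" where
  "reduced n z \<longleftrightarrow> (\<forall>h\<in>{1..2^n-1}. \<forall>l\<in>{1..2^n-1}.
      \<not> bprec n h l \<and> \<not> bprec n l h \<longrightarrow> gcd (z h) (z l) = 1)"

text \<open>Tuples (x'; (z_h)) are pairs of functions, zero outside the index ranges {1..n}, {1..N}.
  All conditions defining A_0 except the gcd condition.\<close>
definition A0_pre :: "nat \<Rightarrow> (nat \<Rightarrow> int) \<Rightarrow> (nat \<Rightarrow> int) \<Rightarrow> bool" where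
  "A0_pre n x' z \<longleftrightarrow>
     (\<forall>i. i \<notin> {1..n} \<longrightarrow> x' i = 0) \<and>
     (\<forall>h. h \<notin> {1..2^n-1} \<longrightarrow> z h = 0) \<and>
     (\<forall>h\<in>{1..2^n-1}. s n h > 1 \<longrightarrow> z h > 0) \<and>
     (\<forall>h\<in>{1..2^n-1}. s n h = 1 \<longrightarrow> z h \<noteq> 0) \<and>
     (\<Sum>i\<in>{1..n}. x' i * (\<Prod>h\<in>{h\<in>{1..2^n-1}. h \<noteq> 2^n-1 \<and> s n h \<ge> 2}.
          z h ^ (1 - eps i h))) = 0 \<and>
     reduced n z"

definition A0_gcd :: "nat \<Rightarrow> (nat \<Rightarrow> int) \<Rightarrow> (nat \<Rightarrow> int) \<Rightarrow> bool" where
  "A0_gcd n x' z \<longleftrightarrow>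
     Gcd ({z (2^n-1)} \<union> (\<lambda>i. x' i * z (2^(i-1))) ` {1..n}) = 1"

definition A0 :: "nat \<Rightarrow> ((nat \<Rightarrow> int) \<times> (nat \<Rightarrow> int)) set" where
  "A0 n = {(x', z). A0_pre n x' z \<and> A0_gcd n x' z}"

definition phi :: "nat \<Rightarrow> (nat \<Rightarrow> int) \<times> (nat \<Rightarrow> int) \<Rightarrow> (nat \<Rightarrow> int) \<times> (nat \<Rightarrow> int)" where
  "phi n p = (case p of (x', z) \<Rightarrow>
     ((\<lambda>i. if i \<in> {1..n} then z (2^(i-1)) * x' i else 0),
      (\<lambda>i. if i \<in> {1..n} then (\<Prod>h\<in>{1..2^n-1}. z h ^ eps i h) else 0)))"

definition B :: "nat \<Rightarrow> ((nat \<Rightarrow> int) \<times> (nat \<Rightarrow> int)) set" where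
  "B n = {(x, y).
     (\<forall>i. i \<notin> {1..n} \<longrightarrow> x i = 0 \<and> y i = 0) \<and>
     (\<Prod>i\<in>{1..n}. y i) \<noteq> 0 \<and>
     (\<Sum>i\<in>{1..n}. x i * (\<Prod>j\<in>{1..n} - {i}. y j)) = 0 \<and>
     Gcd (x ` {1..n} \<union> y ` {1..n}) = 1}"

end

theory Submission
  imports Defs "HOL-Computational_Algebra.Primes"
begin

text \<open>
  Identify \<open>h \<in> {1..2^n-1}\<close> with the nonempty set of its binary digits.  For a prime \<open>p\<close>,
  reducedness of \<open>(z\<^sub>h)\<close> says exactly that the \<open>h\<close> with \<open>p\<close> dividing \<open>z\<^sub>h\<close> form a chain,
  and \<open>v\<^sub>p(y\<^sub>i) = \<Sum>\<^bsub>i \<in> h\<^esub> v\<^sub>p(z\<^sub>h)\<close>.  Any valuation vector \<open>a\<close> on \<open>{1..n}\<close> has exactly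
  one such chain-supported decomposition, read off from its level sets \<open>{i. k \<le> a\<^sub>i}\<close>.
  Hence \<open>y\<close> determines \<open>|z|\<close>, and the sign convention determines \<open>z\<close>.  Along the chain for
  \<open>p\<close>, the singleton \<open>{i}\<close> makes \<open>v\<^sub>p(y\<^sub>i)\<close> exceed every other \<open>v\<^sub>p(y\<^sub>j)\<close> by
  \<open>v\<^sub>p(z\<^bsub>2^(i-1)\<^esub>)\<close>, so the equation \<open>\<Sum> x\<^sub>i \<Prod>\<^bsub>j\<noteq>i\<^esub> y\<^sub>j = 0\<close> forces
  \<open>z\<^bsub>2^(i-1)\<^esub> | x\<^sub>i\<close>; after substituting \<open>x\<^sub>i = z\<^bsub>2^(i-1)\<^esub>x'\<^sub>i\<close> it is the equation of
  \<open>A\<^sub>0\<close> times a nonzero product of the \<open>z\<^sub>h\<close>.  Finally a prime dividing every \<open>y\<^sub>i\<close>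
  divides the \<open>z\<^sub>h\<close> along a chain covering \<open>{1..n}\<close>, whose top is \<open>N\<close>; so the two gcd
  conditions agree.  The argument only uses \<open>n \<ge> 1\<close>.
\<close>

section \<open>Chain-supported decompositions\<close>

definition chain_supported :: "'h set \<Rightarrow> ('h \<Rightarrow> 'i set) \<Rightarrow> ('h \<Rightarrow> nat) \<Rightarrow> bool" where
  "chain_supported X b u \<longleftrightarrow>
     (\<forall>h\<in>X. \<forall>l\<in>X. 0 < u h \<longrightarrow> 0 < u l \<longrightarrow> b h \<subseteq> b l \<or> b l \<subseteq> b h)"

definition cover_sum :: "'h set \<Rightarrow> ('h \<Rightarrow> 'i set) \<Rightarrow> ('h \<Rightarrow> nat) \<Rightarrow> 'i \<Rightarrow> nat" where
  "cover_sum X b u i = (\<Sum>h\<in>{h\<in>X. i \<in> b h}. u h)"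

lemma chain_supported_cong:
  "(\<And>h. h \<in> X \<Longrightarrow> u h = v h) \<Longrightarrow> chain_supported X b u \<longleftrightarrow> chain_supported X b v"
  unfolding chain_supported_def by simp

lemma cover_sum_cong:
  "(\<And>h. h \<in> X \<Longrightarrow> u h = v h) \<Longrightarrow> cover_sum X b u i = cover_sum X b v i"
  unfolding cover_sum_def by simp

locale set_family =
  fixes X :: "'h set" and b :: "'h \<Rightarrow> 'i set" and I :: "'i set"
  assumes finite_X: "finite X" and finite_I: "finite I"
    and subset_I: "h \<in> X \<Longrightarrow> b h \<subseteq> I"
    and nonempty: "h \<in> X \<Longrightarrow> b h \<noteq> {}"
    and inj_b: "inj_on b X"
begin

lemma weight_le_cover_sum: "h \<in> X \<Longrightarrow> i \<in> b h \<Longrightarrow> u h \<le> cover_sum X b u i"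
  unfolding cover_sum_def using finite_X by (intro member_le_sum) auto

lemma weight_eq_0_if_cover_sums_0:
  assumes "\<And>i. i \<in> I \<Longrightarrow> cover_sum X b u i = 0" and "h \<in> X"
  shows "u h = 0"
proof -
  obtain i where i: "i \<in> b h" using nonempty assms(2) by blast
  then have "cover_sum X b u i = 0" using subset_I[OF assms(2)] assms(1) by blast
  then show ?thesis using weight_le_cover_sum[OF assms(2) i, of u] by simp
qed

lemma cover_sum_pos_iff: "0 < cover_sum X b u i \<longleftrightarrow> (\<exists>h\<in>X. i \<in> b h \<and> 0 < u h)"
  unfolding cover_sum_def using finite_X by (auto simp: sum_eq_0_iff simp flip: neq0_conv)

lemma cover_sum_remove:
  assumes "t \<in> X"
  shows "cover_sum X b u i = cover_sum X b (u(t := 0)) i + (if i \<in> b t then u t else 0)"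
proof -
  have fin: "finite {h\<in>X. i \<in> b h}" using finite_X by simp
  have "cover_sum X b u i = (\<Sum>h\<in>{h\<in>X. i \<in> b h}. (u(t := 0)) h + (if h = t then u t else 0))"
    unfolding cover_sum_def by (intro sum.cong) auto
  also have "\<dots> = cover_sum X b (u(t := 0)) i + (if i \<in> b t then u t else 0)"
    unfolding cover_sum_def sum.distrib using fin assms by (simp add: sum.delta)
  finally show ?thesis .
qed

lemma chain_supported_greatest:
  assumes chain: "chain_supported X b u" and h: "h \<in> X" "0 < u h"
  obtains t where "t \<in> X" "0 < u t" "\<And>l. l \<in> X \<Longrightarrow> 0 < u l \<Longrightarrow> b l \<subseteq> b t"
    "\<exists>i\<in>b t. \<forall>l\<in>X - {t}. 0 < u l \<longrightarrow> i \<notin> b l"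
proof -
  define C where "C = {l\<in>X. 0 < u l}"
  have chain_C: "subset.chain UNIV (b ` C')" if "C' \<subseteq> C" for C'
    using chain that unfolding chain_supported_def subset.chain_def C_def by blast
  have finite_C: "finite C" using finite_X by (simp add: C_def)
  have "\<Union>(b ` C) \<in> b ` C"
    using h finite_C chain_C by (intro Union_in_chain) (auto simp: C_def)
  then obtain t where t: "t \<in> C" "b t = \<Union>(b ` C)" by auto
  have "\<exists>i\<in>b t. \<forall>l\<in>C - {t}. i \<notin> b l"
  proof (cases "C - {t} = {}")
    case True
    obtain i where "i \<in> b t" using nonempty t(1) by (auto simp: C_def)
    then show ?thesis using True by blast
  next
    case False
    have "\<Union>(b ` (C - {t})) \<in> b ` (C - {t})"
      using False finite_C chain_C by (intro Union_in_chain) auto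
    then obtain t' where t': "t' \<in> C - {t}" "b t' = \<Union>(b ` (C - {t}))" by auto
    have "b t' \<noteq> b t" using inj_b t(1) t'(1) by (auto simp: C_def inj_on_def)
    moreover have "b t' \<subseteq> b t" using t t'(1) by blast
    ultimately obtain i where "i \<in> b t" "i \<notin> b t'" by blast
    then show ?thesis using t' by blast
  qed
  then show thesis using that t by (auto simp: C_def)
qed

lemma chain_supported_top:
  assumes chain: "chain_supported X b u" and i0: "i0 \<in> I" "0 < cover_sum X b u i0"
  obtains t where "t \<in> X" "0 < u t" "b t = {i\<in>I. 0 < cover_sum X b u i}"
    "u t = Min (cover_sum X b u ` b t)"
proof -
  obtain h where h: "h \<in> X" "0 < u h"
    using i0(2) cover_sum_pos_iff by blast
  obtain t where t: "t \<in> X" "0 < u t" and below: "\<And>l. l \<in> X \<Longrightarrow> 0 < u l \<Longrightarrow> b l \<subseteq> b t"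
    and "\<exists>i\<in>b t. \<forall>l\<in>X - {t}. 0 < u l \<longrightarrow> i \<notin> b l"
    using chain_supported_greatest[OF chain h] by blast
  then obtain i where i: "i \<in> b t" "\<forall>l\<in>X - {t}. 0 < u l \<longrightarrow> i \<notin> b l" by blast
  have support: "b t = {i\<in>I. 0 < cover_sum X b u i}"
  proof (intro equalityI subsetI)
    fix j assume "j \<in> b t"
    then show "j \<in> {i\<in>I. 0 < cover_sum X b u i}"
      using subset_I t cover_sum_pos_iff by blast
  next
    fix j assume "j \<in> {i\<in>I. 0 < cover_sum X b u i}"
    then obtain l where "l \<in> X" "j \<in> b l" "0 < u l"
      using cover_sum_pos_iff by blast
    then show "j \<in> b t" using below by blast
  qed
  have "cover_sum X b (u(t := 0)) i = 0"
    unfolding cover_sum_def using i(2) by (intro sum.neutral) auto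
  then have "cover_sum X b u i = u t"
    using cover_sum_remove[OF t(1), of u i] i(1) by simp
  moreover have "u t \<le> cover_sum X b u j" if "j \<in> b t" for j
    using weight_le_cover_sum t(1) that .
  moreover have "finite (b t)" using subset_I[OF t(1)] finite_I finite_subset by blast
  ultimately have "u t = Min (cover_sum X b u ` b t)"
    using i(1) by (intro Min_eqI[symmetric]) (auto intro: rev_image_eqI)
  with t support show thesis using that by blast
qed

lemma chain_supported_top_unique:
  assumes u: "chain_supported X b u" and v: "chain_supported X b v"
    and eq: "\<And>i. i \<in> I \<Longrightarrow> cover_sum X b u i = cover_sum X b v i"
    and i0: "i0 \<in> I" "0 < cover_sum X b u i0"
  obtains t where "t \<in> X" "0 < u t" "v t = u t" "b t = {i\<in>I. 0 < cover_sum X b u i}"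
proof -
  obtain t where t: "t \<in> X" "0 < u t" "b t = {i\<in>I. 0 < cover_sum X b u i}"
    and ut: "u t = Min (cover_sum X b u ` b t)"
    using chain_supported_top[OF u i0] by blast
  have "0 < cover_sum X b v i0" using i0 eq by simp
  then obtain t' where t': "t' \<in> X" "b t' = {i\<in>I. 0 < cover_sum X b v i}"
    and vt': "v t' = Min (cover_sum X b v ` b t')"
    using chain_supported_top[OF v i0(1)] by blast
  have "b t' = b t" using t(3) t'(2) eq by auto
  then have "t' = t" using inj_b t(1) t'(1) by (auto dest: inj_onD)
  moreover have "cover_sum X b v ` b t = cover_sum X b u ` b t"
    using t(3) eq by (intro image_cong) auto
  ultimately have "v t = u t" using ut vt' by simp
  with t show thesis using that by blast
qed

text \<open>Peel off the top of the support, which both families share, and induct on the total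
  cover sum.\<close>

lemma chain_supported_unique:
  assumes "chain_supported X b u" "chain_supported X b v"
    and "\<And>i. i \<in> I \<Longrightarrow> cover_sum X b u i = cover_sum X b v i" and "h \<in> X"
  shows "u h = v h"
  using assms
proof (induction "\<Sum>i\<in>I. cover_sum X b u i" arbitrary: u v h rule: less_induct)
  case less
  show ?case
  proof (cases "\<exists>i\<in>I. 0 < cover_sum X b u i")
    case False
    have "u h = 0"
      by (rule weight_eq_0_if_cover_sums_0[OF _ less.prems(4)]) (use False in auto)
    moreover have "v h = 0"
      by (rule weight_eq_0_if_cover_sums_0[OF _ less.prems(4)]) (use False less.prems(3) in auto)
    ultimately show ?thesis by simp
  next
    case True
    then obtain i0 where i0: "i0 \<in> I" "0 < cover_sum X b u i0" by blast
    obtain t where t: "t \<in> X" "0 < u t" "v t = u t" "b t = {i\<in>I. 0 < cover_sum X b u i}"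
      using chain_supported_top_unique[OF less.prems(1-3) i0] by blast
    define u' where "u' = u(t := 0)"
    define v' where "v' = v(t := 0)"
    have cover_u': "cover_sum X b u i = cover_sum X b u' i + (if i \<in> b t then u t else 0)" for i
      unfolding u'_def by (rule cover_sum_remove[OF t(1)])
    have cover_v': "cover_sum X b v i = cover_sum X b v' i + (if i \<in> b t then u t else 0)" for i
      unfolding v'_def using cover_sum_remove[OF t(1), of v i] t(3) by simp
    have "cover_sum X b u' i \<le> cover_sum X b u i" for i
      using cover_u'[of i] by linarith
    moreover have "cover_sum X b u' i0 < cover_sum X b u i0"
      using cover_u'[of i0] i0 t(2,4) by simp
    ultimately have "(\<Sum>i\<in>I. cover_sum X b u' i) < (\<Sum>i\<in>I. cover_sum X b u i)"
      using finite_I i0(1) by (intro sum_strict_mono_ex1) auto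
    moreover have "chain_supported X b u'" "chain_supported X b v'"
      using less.prems(1,2) unfolding chain_supported_def u'_def v'_def by auto
    moreover have "cover_sum X b u' i = cover_sum X b v' i" if "i \<in> I" for i
      using less.prems(3)[OF that] cover_u'[of i] cover_v'[of i] by simp
    ultimately have "u' h = v' h" by (rule less.hyps) (use less.prems(4) in auto)
    then show ?thesis using t(3) by (cases "h = t") (auto simp: u'_def v'_def)
  qed
qed

lemma cover_sum_dominated_by_singleton:
  assumes chain: "chain_supported X b u" and t: "t \<in> X" "b t = {i}" "0 < u t"
    and j: "j \<noteq> i"
  shows "cover_sum X b u j + u t \<le> cover_sum X b u i"
proof -
  have "(if j \<in> b h then u h else 0) \<le> (if i \<in> b h then (u(t := 0)) h else 0)" if "h \<in> X" for h
  proof (cases "j \<in> b h \<and> 0 < u h")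
    case True
    then have "b h \<subseteq> b t \<or> b t \<subseteq> b h" using chain t that unfolding chain_supported_def by blast
    then show ?thesis using True t(2) j by auto
  qed auto
  then have "cover_sum X b u j \<le> cover_sum X b (u(t := 0)) i"
    unfolding cover_sum_def sum.inter_filter[OF finite_X] by (rule sum_mono)
  then show ?thesis using cover_sum_remove[OF t(1), of u i] t(2) by simp
qed

text \<open>The weight of \<open>h\<close> counts the levels \<open>k \<ge> 1\<close> whose level set \<open>{i \<in> I. k \<le> a i}\<close>
  is \<open>b h\<close>.\<close>

lemma chain_supported_exists:
  assumes onto: "\<And>S. S \<subseteq> I \<Longrightarrow> S \<noteq> {} \<Longrightarrow> \<exists>h\<in>X. b h = S"
  shows "\<exists>u. chain_supported X b u \<and> (\<forall>i\<in>I. cover_sum X b u i = a i)"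
proof -
  define level where "level k = {i\<in>I. k \<le> a i}" for k
  define K where "K h = {k. 0 < k \<and> level k = b h}" for h
  have finite_K: "finite (K h)" if h: "h \<in> X" for h
  proof -
    obtain i where "i \<in> b h" using nonempty h by blast
    then have "K h \<subseteq> {..a i}" by (auto simp: K_def level_def)
    then show ?thesis using finite_subset by blast
  qed
  have "chain_supported X (b :: 'h \<Rightarrow> 'i set) (\<lambda>h. card (K h))"
    unfolding chain_supported_def
  proof (intro ballI impI)
    fix h l assume "h \<in> X" "l \<in> X" "0 < card (K h)" "0 < card (K l)"
    then obtain k k' where "level k = b h" "level k' = b l"
      by (metis (mono_tags, lifting) K_def card.empty ex_in_conv less_irrefl mem_Collect_eq)
    moreover have "level k' \<subseteq> level k \<or> level k \<subseteq> level k'"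
      using nat_le_linear[of k k'] by (auto simp: level_def)
    ultimately show "b h \<subseteq> b l \<or> b l \<subseteq> b h" by auto
  qed
  moreover have "cover_sum X b (\<lambda>h. card (K h)) i = a i" if "i \<in> I" for i
  proof -
    have "{1..a i} = (\<Union>h\<in>{h\<in>X. i \<in> b h}. K h)"
    proof (intro equalityI subsetI)
      fix k assume k: "k \<in> {1..a i}"
      then have "level k \<subseteq> I" "level k \<noteq> {}" using that by (auto simp: level_def)
      then obtain h where "h \<in> X" "b h = level k" using onto by blast
      then show "k \<in> (\<Union>h\<in>{h\<in>X. i \<in> b h}. K h)" using k that by (auto simp: K_def level_def)
    qed (auto simp: K_def level_def)
    moreover have "K h \<inter> K l = {}" if "h \<in> X" "l \<in> X" "h \<noteq> l" for h l
      using that inj_b by (auto simp: K_def dest: inj_onD)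
    ultimately have "card {1..a i} = (\<Sum>h\<in>{h\<in>X. i \<in> b h}. card (K h))"
      using finite_X finite_K by (simp add: card_UN_disjoint)
    then show ?thesis by (simp add: cover_sum_def)
  qed
  ultimately show ?thesis by blast
qed

end

section \<open>Binary digits as subsets\<close>

definition bits :: "nat \<Rightarrow> nat \<Rightarrow> nat set" where
  "bits n h = {j\<in>{1..n}. bit h (j - 1)}"

lemma eps_eq_bits: "j \<in> {1..n} \<Longrightarrow> eps j h = of_bool (j \<in> bits n h)"
  unfolding eps_def bits_def by (simp add: bit_iff_odd odd_iff_mod_2_eq_one)

lemma bits_subset: "bits n h \<subseteq> {1..n}"
  by (auto simp: bits_def)

lemma finite_bits [simp]: "finite (bits n h)"
  using finite_subset[OF bits_subset] by blast

lemma s_eq_card_bits: "s n h = card (bits n h)"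
proof -
  have "s n h = (\<Sum>j\<in>{1..n}. of_bool (j \<in> bits n h))"
    unfolding s_def by (intro sum.cong) (simp_all add: eps_eq_bits)
  also have "\<dots> = card (bits n h)"
    using bits_subset by (simp add: sum_of_bool_eq Int_absorb1)
  finally show ?thesis .
qed

lemma bprec_iff_bits_subset: "bprec n h l \<longleftrightarrow> bits n h \<subseteq> bits n l"
proof -
  have "bprec n h l \<longleftrightarrow> (\<forall>j\<in>{1..n}. j \<in> bits n h \<longrightarrow> j \<in> bits n l)"
    unfolding bprec_def by (intro ball_cong refl) (simp add: eps_eq_bits[of _ n])
  then show ?thesis using bits_subset by blast
qed

lemma inj_on_bits: "inj_on (bits n) {..<2^n}"
proof (rule inj_onI)
  fix h l assume "h \<in> {..<2^n}" "l \<in> {..<2^n}" and eq: "bits n h = bits n l"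
  then have "take_bit n h = h" "take_bit n l = l" by (simp_all add: take_bit_nat_eq_self)
  moreover have "bit h k = bit l k" if "k < n" for k
  proof -
    have "Suc k \<in> bits n h \<longleftrightarrow> Suc k \<in> bits n l" using eq by simp
    then show ?thesis using that by (simp add: bits_def)
  qed
  ultimately show "h = l" by (metis bit_eq_iff bit_take_bit_iff)
qed

lemma bits_eq_iff: "h < 2^n \<Longrightarrow> l < 2^n \<Longrightarrow> bits n h = bits n l \<longleftrightarrow> h = l"
  using inj_on_bits by (auto dest: inj_onD)

lemma bits_pow2: "j \<in> {1..n} \<Longrightarrow> bits n (2^(j-1)) = {j}"
  by (auto simp: bits_def bit_exp_iff)

lemma bits_mask: "bits n (2^n - 1) = {1..n}"
proof -
  have "2^n - 1 = (mask n :: nat)" by (simp add: mask_eq_exp_minus_1)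
  then show ?thesis by (auto simp: bits_def bit_mask_iff)
qed

lemma less_pow2_if_mem: "h \<in> {1..2^n-1} \<Longrightarrow> h < (2::nat)^n"
  using zero_less_power[of 2 n] by (auto simp del: zero_less_power)

lemma pow2_mem: "j \<in> {1..n} \<Longrightarrow> (2::nat)^(j-1) \<in> {1..2^n-1}"
proof -
  assume "j \<in> {1..n}"
  then have "(2::nat)^(j-1) < 2^n" by (intro power_strict_increasing) auto
  then show ?thesis by (simp add: le_diff_conv2 Suc_le_eq)
qed

lemma mask_mem: "1 \<le> n \<Longrightarrow> (2::nat)^n - 1 \<in> {1..2^n-1}"
  using one_less_power[of "2::nat" n] by simp

lemma bits_eq_singleton_iff:
  assumes "h \<in> {1..2^n-1}" "j \<in> {1..n}"
  shows "bits n h = {j} \<longleftrightarrow> h = 2^(j-1)"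
  using bits_eq_iff[OF less_pow2_if_mem less_pow2_if_mem, OF assms(1) pow2_mem[OF assms(2)]]
  unfolding bits_pow2[OF assms(2)] .

lemma bits_eq_mask_iff: "h \<in> {1..2^n-1} \<Longrightarrow> bits n h = {1..n} \<longleftrightarrow> h = 2^n - 1"
  using bits_eq_iff[of h n "2^n - 1"] less_pow2_if_mem unfolding bits_mask by simp

lemma two_le_card_bits:
  assumes "h \<in> {1..2^n-1}" "j \<in> bits n h" "h \<noteq> 2^(j-1)"
  shows "2 \<le> card (bits n h)"
proof -
  have "j \<in> {1..n}" using assms(2) bits_subset by blast
  then have "bits n h \<noteq> {j}" using assms bits_eq_singleton_iff by blast
  then have "card (bits n h) \<noteq> 1" using assms(2) by (auto simp: card_1_singleton_iff)
  moreover have "card (bits n h) \<noteq> 0" using assms(2) by auto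
  ultimately show ?thesis by linarith
qed

lemma bits_image: "bits n ` {1..2^n-1} = {S. S \<subseteq> {1..n} \<and> S \<noteq> {}}"
proof (rule card_subset_eq)
  have "bits n h \<noteq> {}" if "h \<in> {1..2^n-1}" for h
    using that less_pow2_if_mem bits_eq_iff[of h n 0] by (auto simp: bits_def)
  then show "bits n ` {1..2^n-1} \<subseteq> {S. S \<subseteq> {1..n} \<and> S \<noteq> {}}"
    using bits_subset by blast
  have "{S. S \<subseteq> {1..n} \<and> S \<noteq> {}} = Pow {1..n} - {{}}" by auto
  then have "card {S. S \<subseteq> {1..n} \<and> S \<noteq> {}} = 2^n - 1"
    by (simp add: card_Pow)
  moreover have "inj_on (bits n) {1..2^n-1}"
    using inj_on_bits by (rule inj_on_subset) auto
  ultimately show "card (bits n ` {1..2^n-1}) = card {S. S \<subseteq> {1..n} \<and> S \<noteq> {}}"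
    by (simp add: card_image)
qed simp

lemma bits_onto:
  assumes "S \<subseteq> {1..n}" "S \<noteq> {}"
  shows "\<exists>h\<in>{1..2^n-1}. bits n h = S"
proof -
  have "S \<in> bits n ` {1..2^n-1}" unfolding bits_image using assms by blast
  then obtain h where "h \<in> {1..2^n-1}" "S = bits n h" by (rule imageE)
  then show ?thesis by blast
qed

interpretation bits_family: set_family "{1..2^n-1}" "bits n" "{1..n}" for n
proof
  show "inj_on (bits n) {1..2^n-1}"
    using inj_on_bits by (rule inj_on_subset) auto
  show "bits n h \<subseteq> {1..n}" for h by (rule bits_subset)
  show "bits n h \<noteq> {}" if "h \<in> {1..2^n-1}" for h
    using that bits_image by blast
qed simp_all

lemma Gcd_eq_1_iff_no_common_prime:
  "Gcd (A :: int set) = 1 \<longleftrightarrow> (\<forall>p. prime p \<longrightarrow> (\<exists>a\<in>A. \<not> p dvd a))"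
proof
  assume "Gcd A = 1"
  then show "\<forall>p. prime p \<longrightarrow> (\<exists>a\<in>A. \<not> p dvd a)"
    using Gcd_greatest not_prime_unit by (metis dvd_1_iff_1)
next
  assume no_prime: "\<forall>p. prime p \<longrightarrow> (\<exists>a\<in>A. \<not> p dvd a)"
  have "is_unit (Gcd A)"
  proof (rule ccontr)
    assume "\<not> is_unit (Gcd A)"
    moreover have "Gcd A \<noteq> 0"
      using no_prime[rule_format, of 2] by auto
    ultimately obtain p where "prime p" "p dvd Gcd A"
      using prime_divisor_exists by blast
    then show False using no_prime Gcd_dvd dvd_trans by blast
  qed
  then show "Gcd A = 1" by (simp add: is_unit_normalize)
qed

lemma gcd_eq_1_iff_no_common_prime: 
  "gcd (a :: int) b = 1 \<longleftrightarrow> (\<forall>p. prime p \<longrightarrow> \<not> (p dvd a \<and> p dvd b))"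
  using Gcd_eq_1_iff_no_common_prime[of "{a, b}"] by auto

lemma prime_multiplicity_gt_zero_iff:
  fixes p x :: "'a :: factorial_semiring"
  shows "prime p \<Longrightarrow> x \<noteq> 0 \<Longrightarrow> 0 < multiplicity p x \<longleftrightarrow> p dvd x"
  using not_prime_unit by (intro multiplicity_gt_zero_iff) blast+

text \<open>The exponent of \<open>z h\<close>, with \<open>S = bits n h\<close>, on the two sides of
  \<open>ycoord_cofactor\<close> below.\<close>

lemma card_remove_exponent:
  assumes "finite S" "S \<noteq> {}" "i \<in> I"
  shows "of_bool (S = {i}) + card (S - {i})
       = max 1 (card S - 1) + of_bool (S \<noteq> I \<and> 2 \<le> card S \<and> i \<notin> S)"
proof (cases "i \<in> S")
  case True
  have "2 \<le> card S" if "S \<noteq> {i}"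
  proof -
    from \<open>S \<noteq> {i}\<close> True obtain j where "j \<in> S" "j \<noteq> i" by blast
    then have "card {i, j} \<le> card S" using True assms(1) by (intro card_mono) auto
    then show "2 \<le> card S" using \<open>j \<noteq> i\<close> by simp
  qed
  then show ?thesis using True assms(1) by (cases "S = {i}") auto
next
  case False
  have "0 < card S" using assms(1,2) by (simp add: card_gt_0_iff)
  then show ?thesis using False assms(3) by (cases "card S = 1") auto
qed

lemma prime_power_dvd_if_dominant:
  fixes x y :: "'a \<Rightarrow> int"
  assumes fin: "finite I" and i: "i \<in> I" and nonzero: "\<And>j. j \<in> I \<Longrightarrow> y j \<noteq> 0"
    and sum_zero: "(\<Sum>k\<in>I. x k * (\<Prod>j\<in>I - {k}. y j)) = 0" and p: "prime p"
    and dominant: "\<And>j. j \<in> I - {i} \<Longrightarrow> multiplicity p (y j) + e \<le> multiplicity p (y i)"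
  shows "p ^ e dvd x i"
proof (cases "x i = 0")
  case False
  define m where "m j = multiplicity p (y j)" for j
  have mult_prod: "multiplicity p (\<Prod>j\<in>J. y j) = (\<Sum>j\<in>J. m j)" if "J \<subseteq> I" for J
    unfolding m_def using that nonzero p fin
    by (intro prime_elem_multiplicity_prod_distrib) (auto intro: finite_subset)
  define Q where "Q = (\<Prod>j\<in>I - {i}. y j)"
  have Q: "Q \<noteq> 0" "multiplicity p Q = (\<Sum>j\<in>I - {i}. m j)"
    using nonzero fin mult_prod[of "I - {i}"] by (auto simp: Q_def)
  have "p ^ (multiplicity p Q + e) dvd x k * (\<Prod>j\<in>I - {k}. y j)" if k: "k \<in> I - {i}" for k
  proof -
    have "multiplicity p Q + e = m k + e + (\<Sum>j\<in>I - {i} - {k}. m j)"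
      using Q(2) fin k by (simp add: sum.remove)
    also have "\<dots> \<le> m i + (\<Sum>j\<in>I - {k} - {i}. m j)"
      using dominant[OF k] by (simp add: m_def Diff_insert2[symmetric] insert_commute)
    also have "\<dots> = multiplicity p (\<Prod>j\<in>I - {k}. y j)"
      using mult_prod[of "I - {k}"] sum.remove[of "I - {k}" i m] fin i k by auto
    finally show ?thesis by (intro dvd_mult multiplicity_dvd')
  qed
  then have "p ^ (multiplicity p Q + e) dvd (\<Sum>k\<in>I - {i}. x k * (\<Prod>j\<in>I - {k}. y j))"
    by (rule dvd_sum)
  moreover have "x i * Q = - (\<Sum>k\<in>I - {i}. x k * (\<Prod>j\<in>I - {k}. y j))"
    using sum_zero sum.remove[OF fin i, of "\<lambda>k. x k * (\<Prod>j\<in>I - {k}. y j)"]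
    unfolding Q_def by (simp add: eq_neg_iff_add_eq_0)
  ultimately have "p ^ (multiplicity p Q + e) dvd x i * Q" by simp
  moreover have "\<not> is_unit p" using p not_prime_unit by blast
  ultimately have "multiplicity p Q + e \<le> multiplicity p (x i * Q)"
    using False Q(1) by (intro multiplicity_geI) simp_all
  also have "\<dots> = multiplicity p (x i) + multiplicity p Q"
    by (rule prime_elem_multiplicity_mult_distrib[OF prime_imp_prime_elem[OF p] False Q(1)])
  finally show ?thesis by (intro multiplicity_dvd') simp
qed simp

section \<open>The coordinates of the map\<close>

definition ycoord :: "nat \<Rightarrow> (nat \<Rightarrow> int) \<Rightarrow> nat \<Rightarrow> int" where
  "ycoord n z i = (\<Prod>h\<in>{h\<in>{1..2^n-1}. i \<in> bits n h}. z h)"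

definition admissible :: "nat \<Rightarrow> (nat \<Rightarrow> int) \<Rightarrow> bool" where
  "admissible n z \<longleftrightarrow> (\<forall>h. h \<notin> {1..2^n-1} \<longrightarrow> z h = 0) \<and>
     (\<forall>h\<in>{1..2^n-1}. z h \<noteq> 0 \<and> (2 \<le> card (bits n h) \<longrightarrow> 0 < z h)) \<and> reduced n z"

lemma card_bits_pos: "h \<in> {1..2^n-1} \<Longrightarrow> 0 < card (bits n h)"
  using bits_family.nonempty by (simp add: card_gt_0_iff)

lemma A0_pre_iff:
  "A0_pre n x' z \<longleftrightarrow> (\<forall>i. i \<notin> {1..n} \<longrightarrow> x' i = 0) \<and> admissible n z \<and>
     (\<Sum>i\<in>{1..n}. x' i * (\<Prod>h\<in>{h\<in>{1..2^n-1}. h \<noteq> 2^n-1 \<and> s n h \<ge> 2}.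
          z h ^ (1 - eps i h))) = 0"
proof -
  have "(\<forall>h\<in>{1..2^n-1}. (s n h > 1 \<longrightarrow> z h > 0) \<and> (s n h = 1 \<longrightarrow> z h \<noteq> 0)) \<longleftrightarrow>
        (\<forall>h\<in>{1..2^n-1}. z h \<noteq> 0 \<and> (2 \<le> card (bits n h) \<longrightarrow> 0 < z h))"
  proof (intro ball_cong refl)
    fix h :: nat assume "h \<in> {1..2^n-1}"
    then have "0 < card (bits n h)" by (rule card_bits_pos)
    then show "(s n h > 1 \<longrightarrow> z h > 0) \<and> (s n h = 1 \<longrightarrow> z h \<noteq> 0) \<longleftrightarrow>
        z h \<noteq> 0 \<and> (2 \<le> card (bits n h) \<longrightarrow> 0 < z h)"
      by (cases "card (bits n h) = 1") (auto simp: s_eq_card_bits)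
  qed
  then show ?thesis unfolding A0_pre_def admissible_def by blast
qed

lemma phi_eq: "phi n (x', z) =
  ((\<lambda>i. if i \<in> {1..n} then z (2^(i-1)) * x' i else 0),
   (\<lambda>i. if i \<in> {1..n} then ycoord n z i else 0))"
proof -
  have "(\<Prod>h\<in>{1..2^n-1}. z h ^ eps i h) = ycoord n z i" if "i \<in> {1..n}" for i
  proof -
    have "(\<Prod>h\<in>{1..2^n-1}. z h ^ eps i h) = (\<Prod>h\<in>{1..2^n-1}. if i \<in> bits n h then z h else 1)"
      using eps_eq_bits[OF that] by (intro prod.cong) auto
    also have "\<dots> = ycoord n z i"
      unfolding ycoord_def by (rule prod.inter_filter[symmetric]) simp
    finally show ?thesis .
  qed
  then show ?thesis unfolding phi_def by auto
qed

lemma image_phi: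
  "fst (phi n (x', z)) ` {1..n} \<union> snd (phi n (x', z)) ` {1..n}
   = (\<lambda>i. z (2^(i-1)) * x' i) ` {1..n} \<union> ycoord n z ` {1..n}"
  unfolding phi_eq by auto

lemma ycoord_nonzero: "admissible n z \<Longrightarrow> ycoord n z i \<noteq> 0"
  unfolding ycoord_def admissible_def by simp

lemma multiplicity_ycoord:
  assumes "\<forall>h\<in>{1..2^n-1}. z h \<noteq> 0" "prime p"
  shows "multiplicity p (ycoord n z i)
       = cover_sum {1..2^n-1} (bits n) (\<lambda>h. multiplicity p (z h)) i"
  unfolding ycoord_def cover_sum_def using assms
  by (intro prime_elem_multiplicity_prod_distrib) (auto simp: prime_imp_prime_elem)

lemma reduced_iff_multiplicity_chains:
  assumes nonzero: "\<forall>h\<in>{1..2^n-1}. z h \<noteq> 0"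
  shows "reduced n z \<longleftrightarrow>
    (\<forall>p. prime p \<longrightarrow> chain_supported {1..2^n-1} (bits n) (\<lambda>h. multiplicity p (z h)))"
proof -
  have "0 < multiplicity p (z h) \<longleftrightarrow> p dvd z h" if "prime p" "h \<in> {1..2^n-1}" for p h
    using that nonzero by (simp add: prime_multiplicity_gt_zero_iff)
  then show ?thesis
    unfolding reduced_def chain_supported_def gcd_eq_1_iff_no_common_prime bprec_iff_bits_subset
    by blast
qed

lemma prime_dvd_ycoords_iff:
  assumes n: "1 \<le> n" and z: "admissible n z" and p: "prime p"
  shows "(\<forall>i\<in>{1..n}. p dvd ycoord n z i) \<longleftrightarrow> p dvd z (2^n - 1)"
proof
  have nonzero: "\<forall>h\<in>{1..2^n-1}. z h \<noteq> 0" and "reduced n z"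
    using z by (auto simp: admissible_def)
  then have chain: "chain_supported {1..2^n-1} (bits n) (\<lambda>h. multiplicity p (z h))"
    using reduced_iff_multiplicity_chains p by blast
  assume "\<forall>i\<in>{1..n}. p dvd ycoord n z i"
  then have "0 < multiplicity p (ycoord n z i)" if "i \<in> {1..n}" for i
    using that p ycoord_nonzero[OF z] by (simp add: prime_multiplicity_gt_zero_iff)
  then have pos: "0 < cover_sum {1..2^n-1} (bits n) (\<lambda>h. multiplicity p (z h)) i"
    if "i \<in> {1..n}" for i
    using that multiplicity_ycoord[OF nonzero p] by simp
  have one: "1 \<in> {1..n}" using n by simp
  obtain t where t: "t \<in> {1..2^n-1}" "0 < multiplicity p (z t)"
    "bits n t = {i\<in>{1..n}. 0 < cover_sum {1..2^n-1} (bits n) (\<lambda>h. multiplicity p (z h)) i}"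
    by (rule bits_family.chain_supported_top[OF chain one pos[OF one]])
  then have "bits n t = {1..n}" using pos by auto
  then have "t = 2^n - 1"
    using bits_eq_iff[OF less_pow2_if_mem less_pow2_if_mem, OF t(1) mask_mem[OF n]]
    unfolding bits_mask by simp
  then show "p dvd z (2^n - 1)"
    using t nonzero p by (simp add: prime_multiplicity_gt_zero_iff)
next
  assume "p dvd z (2^n - 1)"
  moreover have "z (2^n - 1) dvd ycoord n z i" if "i \<in> {1..n}" for i
    unfolding ycoord_def using that mask_mem[OF n] bits_mask by (intro dvd_prodI) auto
  ultimately show "\<forall>i\<in>{1..n}. p dvd ycoord n z i" using dvd_trans by blast
qed

lemma A0_gcd_iff:
  assumes "1 \<le> n" "admissible n z"
  shows "A0_gcd n x' z \<longleftrightarrow> Gcd ((\<lambda>i. z (2^(i-1)) * x' i) ` {1..n} \<union> ycoord n z ` {1..n}) = 1"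
proof -
  have "(\<exists>a\<in>{z (2^n-1)} \<union> (\<lambda>i. x' i * z (2^(i-1))) ` {1..n}. \<not> p dvd a) \<longleftrightarrow>
        (\<exists>a\<in>(\<lambda>i. z (2^(i-1)) * x' i) ` {1..n} \<union> ycoord n z ` {1..n}. \<not> p dvd a)"
    if "prime p" for p
    using prime_dvd_ycoords_iff[OF assms that] by (auto simp: mult.commute)
  then show ?thesis unfolding A0_gcd_def Gcd_eq_1_iff_no_common_prime by simp
qed

lemma sgn_ycoord:
  assumes z: "admissible n z" and j: "j \<in> {1..n}"
  shows "sgn (ycoord n z j) = sgn (z (2^(j-1)))"
proof -
  let ?A = "{h\<in>{1..2^n-1}. j \<in> bits n h}"
  have "2^(j-1) \<in> ?A" using pow2_mem[OF j] bits_pow2[OF j] by simp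
  then have "ycoord n z j = z (2^(j-1)) * (\<Prod>h\<in>?A - {2^(j-1)}. z h)"
    unfolding ycoord_def by (simp add: prod.remove)
  moreover have "0 < (\<Prod>h\<in>?A - {2^(j-1)}. z h)"
  proof (rule prod_pos)
    fix h assume "h \<in> ?A - {2^(j-1)}"
    then have h: "h \<in> {1..2^n-1}" "j \<in> bits n h" "h \<noteq> 2^(j-1)" by auto
    then have "2 \<le> card (bits n h)" by (rule two_le_card_bits)
    then show "0 < z h" using z h(1) by (simp add: admissible_def)
  qed
  ultimately show ?thesis by (simp add: sgn_mult)
qed

lemma admissible_multiplicity_chains:
  "admissible n z \<Longrightarrow> prime p \<Longrightarrow>
    chain_supported {1..2^n-1} (bits n) (\<lambda>h. multiplicity p (z h))"
  using reduced_iff_multiplicity_chains unfolding admissible_def by blast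

lemma admissible_multiplicities_determined:
  assumes z: "admissible n z" and w: "admissible n w"
    and eq: "\<And>i. i \<in> {1..n} \<Longrightarrow> ycoord n z i = ycoord n w i"
    and p: "prime p" and h: "h \<in> {1..2^n-1}"
  shows "multiplicity p (z h) = multiplicity p (w h)"
proof (rule bits_family.chain_supported_unique[OF admissible_multiplicity_chains
      admissible_multiplicity_chains, OF z p w p _ h])
  have nonzero: "\<forall>h\<in>{1..2^n-1}. z h \<noteq> 0" "\<forall>h\<in>{1..2^n-1}. w h \<noteq> 0"
    using z w by (auto simp: admissible_def)
  fix i assume "i \<in> {1..n}"
  then show "cover_sum {1..2^n-1} (bits n) (\<lambda>h. multiplicity p (z h)) i
           = cover_sum {1..2^n-1} (bits n) (\<lambda>h. multiplicity p (w h)) i"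
    using eq multiplicity_ycoord[OF nonzero(1) p, symmetric]
      multiplicity_ycoord[OF nonzero(2) p, symmetric] by simp
qed

lemma admissible_ycoord_inj:
  assumes z: "admissible n z" and w: "admissible n w"
    and eq: "\<And>i. i \<in> {1..n} \<Longrightarrow> ycoord n z i = ycoord n w i"
  shows "z = w"
proof
  fix h
  show "z h = w h"
  proof (cases "h \<in> {1..2^n-1}")
    case False
    then show ?thesis using z w by (simp add: admissible_def)
  next
    case h: True
    have "z h \<noteq> 0" "w h \<noteq> 0" using z w h by (auto simp: admissible_def)
    then have "normalize (z h) = normalize (w h)"
      using admissible_multiplicities_determined[OF z w eq _ h] by (intro multiplicity_eq_imp_eq)
    then have "\<bar>z h\<bar> = \<bar>w h\<bar>" by simp
    moreover have "sgn (z h) = sgn (w h)"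
    proof (cases "card (bits n h) = 1")
      case True
      then obtain j where j: "bits n h = {j}" by (auto simp: card_1_singleton_iff)
      then have j_mem: "j \<in> {1..n}" using bits_subset by blast
      then have "h = 2^(j-1)" using bits_eq_singleton_iff[OF h] j by blast
      then show ?thesis using sgn_ycoord[OF z j_mem] sgn_ycoord[OF w j_mem] eq[OF j_mem] by simp
    next
      case False
      then have "2 \<le> card (bits n h)" using card_bits_pos[OF h] by linarith
      then show ?thesis using z w h by (simp add: admissible_def)
    qed
    ultimately show ?thesis by (metis sgn_mult_abs)
  qed
qed

section \<open>Inverting the map\<close>

lemma multiplicity_decompositions_exist:
  obtains U where "\<And>p. chain_supported {1..2^n-1} (bits n) (U p)"
    "\<And>p i. i \<in> {1..n} \<Longrightarrow> cover_sum {1..2^n-1} (bits n) (U p) i = multiplicity p (y i)"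
proof -
  have "\<exists>u. chain_supported {1..2^n-1} (bits n) u \<and>
          (\<forall>i\<in>{1..n}. cover_sum {1..2^n-1} (bits n) u i = multiplicity p (y i))" for p
    by (rule bits_family.chain_supported_exists[OF bits_onto])
  then have "\<forall>p. \<exists>u. chain_supported {1..2^n-1} (bits n) u \<and>
          (\<forall>i\<in>{1..n}. cover_sum {1..2^n-1} (bits n) u i = multiplicity p (y i))" by blast
  then obtain U where "\<forall>p. chain_supported {1..2^n-1} (bits n) (U p) \<and>
          (\<forall>i\<in>{1..n}. cover_sum {1..2^n-1} (bits n) (U p) i = multiplicity p (y i))"
    by (metis choice)
  then show thesis using that by blast
qed

lemma multiplicity_prime_power_product:
  assumes nonzero: "\<And>i. i \<in> {1..n} \<Longrightarrow> y i \<noteq> 0"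
    and cover: "\<And>i. i \<in> {1..n} \<Longrightarrow> cover_sum {1..2^n-1} (bits n) (U q) i = multiplicity q (y i)"
    and q: "prime q" and h: "h \<in> {1..2^n-1}"
  shows "multiplicity q (\<Prod>p\<in>prime_factors (\<Prod>i\<in>{1..n}. y i). p ^ U p h) = U q h"
proof -
  have formula: "multiplicity q (\<Prod>p\<in>prime_factors (\<Prod>i\<in>{1..n}. y i). p ^ U p h)
      = (if q \<in> prime_factors (\<Prod>i\<in>{1..n}. y i) then U q h else 0)"
    by (rule multiplicity_prod_prime_powers) (auto intro: in_prime_factors_imp_prime q)
  show ?thesis
  proof (cases "q \<in> prime_factors (\<Prod>i\<in>{1..n}. y i)")
    case False
  have "U q h = 0"
  proof (rule bits_family.weight_eq_0_if_cover_sums_0[OF _ h])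
    fix i assume i: "i \<in> {1..n}"
    have "\<not> q dvd y i"
    proof
      assume "q dvd y i"
      then have "q dvd (\<Prod>i\<in>{1..n}. y i)" using i dvd_prodI[of "{1..n}" i y] by auto
      then show False using False q nonzero by (auto simp: in_prime_factors_iff)
    qed
    then show "cover_sum {1..2^n-1} (bits n) (U q) i = 0"
      using cover[OF i] by (simp add: not_dvd_imp_multiplicity_0)
  qed
  with False show ?thesis using formula by simp
  qed (use formula in simp)
qed

lemma positive_ycoord_surj:
  assumes nonzero: "\<And>i. i \<in> {1..n} \<Longrightarrow> y i \<noteq> 0"
  obtains w where "\<And>h. 0 < w h"
    "\<And>p. prime p \<Longrightarrow> chain_supported {1..2^n-1} (bits n) (\<lambda>h. multiplicity p (w h))"
    "\<And>i. i \<in> {1..n} \<Longrightarrow> ycoord n w i = \<bar>y i\<bar>"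
proof -
  let ?H = "{1..2^n-1}"
  obtain U where chain_U: "\<And>p. chain_supported ?H (bits n) (U p)"
    and cover_U: "\<And>p i. i \<in> {1..n} \<Longrightarrow> cover_sum ?H (bits n) (U p) i = multiplicity p (y i)"
    using multiplicity_decompositions_exist[where n = n and y = y] by blast
  define w where "w h = (\<Prod>p\<in>prime_factors (\<Prod>i\<in>{1..n}. y i). p ^ U p h)" for h
  have w_pos: "0 < w h" for h
    unfolding w_def by (intro prod_pos) (simp add: prime_gt_0_int in_prime_factors_iff)
  then have w_nonzero: "\<forall>h\<in>?H. w h \<noteq> 0" by (simp add: less_imp_neq[THEN not_sym])
  have mult_w: "multiplicity q (w h) = U q h" if "prime q" "h \<in> ?H" for q h
    unfolding w_def using nonzero cover_U that by (rule multiplicity_prime_power_product)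
  have "ycoord n w i = \<bar>y i\<bar>" if i: "i \<in> {1..n}" for i
  proof -
    have "normalize (ycoord n w i) = normalize (y i)"
    proof (rule multiplicity_eq_imp_eq)
      show "ycoord n w i \<noteq> 0" "y i \<noteq> 0"
        using w_nonzero nonzero[OF i] by (simp_all add: ycoord_def)
      fix q :: int assume q: "prime q"
      have "multiplicity q (ycoord n w i) = cover_sum ?H (bits n) (\<lambda>h. multiplicity q (w h)) i"
        by (rule multiplicity_ycoord[OF w_nonzero q])
      also have "\<dots> = cover_sum ?H (bits n) (U q) i"
        using mult_w[OF q] by (rule cover_sum_cong)
      finally show "multiplicity q (ycoord n w i) = multiplicity q (y i)"
        using cover_U[OF i] by simp
    qed
    moreover have "0 < ycoord n w i" unfolding ycoord_def using w_pos by (intro prod_pos) auto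
    ultimately show ?thesis by simp
  qed
  moreover have "chain_supported ?H (bits n) (\<lambda>h. multiplicity p (w h))" if "prime p" for p
  proof -
    have "chain_supported ?H (bits n) (\<lambda>h. multiplicity p (w h)) = chain_supported ?H (bits n) (U p)"
      by (rule chain_supported_cong) (rule mult_w[OF that])
    with chain_U show ?thesis by simp
  qed
  ultimately show thesis using that w_pos by blast
qed

lemma prod_singleton_weights:
  fixes f :: "nat \<Rightarrow> 'a :: comm_monoid_mult"
  assumes i: "i \<in> {1..n}"
  shows "(\<Prod>h\<in>{h\<in>{1..2^n-1}. i \<in> bits n h}.
      if card (bits n h) = 1 then \<Prod>j\<in>bits n h. f j else 1) = f i"
    (is "(\<Prod>h\<in>?A. ?g h) = _")
proof -
  have t: "2^(i-1) \<in> ?A" using pow2_mem[OF i] bits_pow2[OF i] by simp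
  have "(\<Prod>h\<in>?A - {2^(i-1)}. ?g h) = 1"
  proof (rule prod.neutral, rule ballI)
    fix h assume "h \<in> ?A - {2^(i-1)}"
    then have "2 \<le> card (bits n h)" by (intro two_le_card_bits) auto
    then show "?g h = 1" by simp
  qed
  then show ?thesis
    using prod.remove[of ?A "2^(i-1)" ?g] t bits_pow2[OF i] by simp
qed

text \<open>Only the coordinates \<open>h = 2^(j-1)\<close> may be negative; they carry the sign of \<open>y j\<close>.\<close>

lemma admissible_ycoord_surj:
  assumes nonzero: "\<And>i. i \<in> {1..n} \<Longrightarrow> y i \<noteq> 0"
  obtains z where "admissible n z" "\<And>i. i \<in> {1..n} \<Longrightarrow> ycoord n z i = y i"
proof -
  let ?H = "{1..2^n-1}"
  obtain w where w_pos: "\<And>h. 0 < w h"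
    and chain_w: "\<And>p. prime p \<Longrightarrow> chain_supported ?H (bits n) (\<lambda>h. multiplicity p (w h))"
    and ycoord_w: "\<And>i. i \<in> {1..n} \<Longrightarrow> ycoord n w i = \<bar>y i\<bar>"
    using positive_ycoord_surj[where n = n and y = y] nonzero by blast
  define sign where "sign h = (if card (bits n h) = 1 then \<Prod>j\<in>bits n h. sgn (y j) else 1)" for h
  define z where "z h = (if h \<in> ?H then sign h * w h else 0)" for h
  have "\<bar>sign h\<bar> = 1" for h
  proof (cases "card (bits n h) = 1")
    case True
    then obtain j where "bits n h = {j}" by (auto simp: card_1_singleton_iff)
    moreover have "j \<in> {1..n}" using calculation bits_subset by blast
    ultimately show ?thesis using nonzero by (simp add: sign_def abs_sgn_eq)
  qed (simp add: sign_def)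
  then have abs_z: "\<bar>z h\<bar> = w h" if "h \<in> ?H" for h
    using that w_pos[of h] by (simp add: z_def abs_mult)
  have nonzero_z: "\<forall>h\<in>?H. z h \<noteq> 0" using abs_z w_pos by (metis less_irrefl abs_0)
  have mult_z: "multiplicity p (z h) = multiplicity p (w h)" if "h \<in> ?H" for p h
    using multiplicity_normalize_right[of p "z h"] abs_z[OF that] by simp
  have "chain_supported ?H (bits n) (\<lambda>h. multiplicity p (z h))" if "prime p" for p
  proof -
    have "chain_supported ?H (bits n) (\<lambda>h. multiplicity p (z h))
        = chain_supported ?H (bits n) (\<lambda>h. multiplicity p (w h))"
      by (rule chain_supported_cong) (rule mult_z)
    with chain_w[OF that] show ?thesis by simp
  qed
  then have "reduced n z" using reduced_iff_multiplicity_chains[OF nonzero_z] by blast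
  then have "admissible n z"
    using nonzero_z w_pos unfolding admissible_def by (auto simp: z_def sign_def)
  moreover have "ycoord n z i = y i" if i: "i \<in> {1..n}" for i
  proof -
    have "ycoord n z i = (\<Prod>h\<in>{h\<in>?H. i \<in> bits n h}. sign h) * ycoord n w i"
      unfolding ycoord_def prod.distrib[symmetric] by (rule prod.cong) (auto simp: z_def)
    also have "(\<Prod>h\<in>{h\<in>?H. i \<in> bits n h}. sign h) = sgn (y i)"
      unfolding sign_def by (rule prod_singleton_weights[OF i])
    finally show ?thesis using ycoord_w[OF i] by (simp add: sgn_mult_abs)
  qed
  ultimately show thesis using that by blast
qed

lemma admissible_dvd_xcoord:
  assumes z: "admissible n z" and i: "i \<in> {1..n}"
    and sum_zero: "(\<Sum>k\<in>{1..n}. x k * (\<Prod>j\<in>{1..n} - {k}. ycoord n z j)) = 0"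
  shows "z (2^(i-1)) dvd x i"
proof (cases "x i = 0")
  case False
  have nonzero: "\<forall>h\<in>{1..2^n-1}. z h \<noteq> 0" using z by (simp add: admissible_def)
  show ?thesis
  proof (rule multiplicity_le_imp_dvd)
    show "z (2^(i-1)) \<noteq> 0" using nonzero pow2_mem[OF i] by blast
    fix q :: int assume q: "prime q"
    let ?e = "multiplicity q (z (2^(i-1)))"
    show "?e \<le> multiplicity q (x i)"
    proof (cases "?e = 0")
      case False
      have "multiplicity q (ycoord n z j) + ?e \<le> multiplicity q (ycoord n z i)"
        if "j \<in> {1..n} - {i}" for j
        using False that multiplicity_ycoord[OF nonzero q]
          bits_family.cover_sum_dominated_by_singleton[OF admissible_multiplicity_chains[OF z q]
            pow2_mem[OF i] bits_pow2[OF i]] by simp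
      then have "q ^ ?e dvd x i"
        using ycoord_nonzero[OF z] by (intro prime_power_dvd_if_dominant[OF _ i _ sum_zero q]) auto
      then show ?thesis
        using \<open>x i \<noteq> 0\<close> q not_prime_unit by (intro multiplicity_geI) auto
    qed simp
  qed
qed simp

lemma admissible_divides_xcoords:
  assumes z: "admissible n z"
    and sum_zero: "(\<Sum>k\<in>{1..n}. x k * (\<Prod>j\<in>{1..n} - {k}. ycoord n z j)) = 0"
  obtains x' where "\<And>i. i \<notin> {1..n} \<Longrightarrow> x' i = 0"
    "\<And>i. i \<in> {1..n} \<Longrightarrow> z (2^(i-1)) * x' i = x i"
proof
  show "(if i \<in> {1..n} then x i div z (2^(i-1)) else 0) = 0" if "i \<notin> {1..n}" for i
    using that by (simp only: if_False)
  show "z (2^(i-1)) * (if i \<in> {1..n} then x i div z (2^(i-1)) else 0) = x i"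
    if "i \<in> {1..n}" for i
    using admissible_dvd_xcoord[OF z that sum_zero] that by simp
qed

lemma prod_ycoord:
  assumes "J \<subseteq> {1..n}"
  shows "(\<Prod>j\<in>J. ycoord n z j) = (\<Prod>h\<in>{1..2^n-1}. z h ^ card (bits n h \<inter> J))"
proof -
  have "(\<Prod>j\<in>J. ycoord n z j) = (\<Prod>h\<in>{1..2^n-1}. \<Prod>j\<in>{j\<in>J. j \<in> bits n h}. z h)"
    unfolding ycoord_def using assms by (intro prod.swap_restrict) (auto intro: finite_subset)
  also have "\<dots> = (\<Prod>h\<in>{1..2^n-1}. z h ^ card (bits n h \<inter> J))"
    by (intro prod.cong refl) (simp add: Int_def conj_commute)
  finally show ?thesis .
qed

lemma A0_factor_eq:
  assumes i: "i \<in> {1..n}"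
  shows "(\<Prod>h\<in>{h\<in>{1..2^n-1}. h \<noteq> 2^n-1 \<and> s n h \<ge> 2}. z h ^ (1 - eps i h))
    = (\<Prod>h\<in>{1..2^n-1}. z h ^ of_bool (bits n h \<noteq> {1..n} \<and> 2 \<le> card (bits n h) \<and> i \<notin> bits n h))"
proof -
  have "(\<Prod>h\<in>{h\<in>{1..2^n-1}. h \<noteq> 2^n-1 \<and> s n h \<ge> 2}. z h ^ (1 - eps i h))
      = (\<Prod>h\<in>{1..2^n-1}. if h \<noteq> 2^n-1 \<and> s n h \<ge> 2 then z h ^ (1 - eps i h) else 1)"
    by (rule prod.inter_filter) simp
  also have "\<dots> = (\<Prod>h\<in>{1..2^n-1}.
      z h ^ of_bool (bits n h \<noteq> {1..n} \<and> 2 \<le> card (bits n h) \<and> i \<notin> bits n h))"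
    using bits_eq_mask_iff eps_eq_bits[OF i] by (intro prod.cong) (auto simp: s_eq_card_bits)
  finally show ?thesis .
qed

lemma ycoord_cofactor:
  assumes i: "i \<in> {1..n}"
  shows "z (2^(i-1)) * (\<Prod>j\<in>{1..n} - {i}. ycoord n z j)
       = (\<Prod>h\<in>{1..2^n-1}. z h ^ max 1 (card (bits n h) - 1)) *
         (\<Prod>h\<in>{h\<in>{1..2^n-1}. h \<noteq> 2^n-1 \<and> s n h \<ge> 2}. z h ^ (1 - eps i h))"
proof -
  let ?H = "{1..2^n-1}"
  have "(\<Prod>h\<in>?H. z h ^ of_bool (bits n h = {i})) = (\<Prod>h\<in>?H. if h = 2^(i-1) then z h else 1)"
    using bits_eq_singleton_iff[OF _ i] by (intro prod.cong) auto
  then have pow: "z (2^(i-1)) = (\<Prod>h\<in>?H. z h ^ of_bool (bits n h = {i}))"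
    using pow2_mem[OF i] by simp
  have "bits n h \<inter> ({1..n} - {i}) = bits n h - {i}" for h using bits_subset by blast
  then have cofactor: "(\<Prod>j\<in>{1..n} - {i}. ycoord n z j) = (\<Prod>h\<in>?H. z h ^ card (bits n h - {i}))"
    using prod_ycoord[of "{1..n} - {i}" n z] by simp
  have exponents: "of_bool (bits n h = {i}) + card (bits n h - {i})
      = max 1 (card (bits n h) - 1) + of_bool (bits n h \<noteq> {1..n} \<and> 2 \<le> card (bits n h) \<and> i \<notin> bits n h)"
    if "h \<in> ?H" for h
    using bits_family.nonempty[OF that] i by (intro card_remove_exponent) auto
  show ?thesis
    unfolding pow cofactor A0_factor_eq[OF i] prod.distrib[symmetric] power_add[symmetric]
    using exponents by (intro prod.cong refl) simp
qed

lemma cleared_equation_iff: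
  assumes z: "admissible n z"
  shows "(\<Sum>i\<in>{1..n}. (z (2^(i-1)) * x' i) * (\<Prod>j\<in>{1..n} - {i}. ycoord n z j)) = 0 \<longleftrightarrow>
    (\<Sum>i\<in>{1..n}. x' i * (\<Prod>h\<in>{h\<in>{1..2^n-1}. h \<noteq> 2^n-1 \<and> s n h \<ge> 2}.
       z h ^ (1 - eps i h))) = 0"
proof -
  let ?c = "\<Prod>h\<in>{1..2^n-1}. z h ^ max 1 (card (bits n h) - 1)"
  have "(\<Sum>i\<in>{1..n}. (z (2^(i-1)) * x' i) * (\<Prod>j\<in>{1..n} - {i}. ycoord n z j))
      = ?c * (\<Sum>i\<in>{1..n}. x' i * (\<Prod>h\<in>{h\<in>{1..2^n-1}. h \<noteq> 2^n-1 \<and> s n h \<ge> 2}.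
          z h ^ (1 - eps i h)))"
    unfolding sum_distrib_left
  proof (intro sum.cong refl)
    fix i assume i: "i \<in> {1..n}"
    have "(z (2^(i-1)) * x' i) * (\<Prod>j\<in>{1..n} - {i}. ycoord n z j)
        = x' i * (z (2^(i-1)) * (\<Prod>j\<in>{1..n} - {i}. ycoord n z j))" by (simp only: ac_simps)
    also have "\<dots> = x' i * (?c * (\<Prod>h\<in>{h\<in>{1..2^n-1}. h \<noteq> 2^n-1 \<and> s n h \<ge> 2}.
          z h ^ (1 - eps i h)))"
      unfolding ycoord_cofactor[OF i] ..
    finally show "(z (2^(i-1)) * x' i) * (\<Prod>j\<in>{1..n} - {i}. ycoord n z j)
        = ?c * (x' i * (\<Prod>h\<in>{h\<in>{1..2^n-1}. h \<noteq> 2^n-1 \<and> s n h \<ge> 2}.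
          z h ^ (1 - eps i h)))" by (simp only: ac_simps)
  qed
  moreover have "?c \<noteq> 0" using z by (simp add: admissible_def)
  ultimately show ?thesis by simp
qed

lemma restricted_mem_B_iff:
  "((\<lambda>i. if i \<in> {1..n} then f i else 0), (\<lambda>i. if i \<in> {1..n} then g i else 0)) \<in> B n \<longleftrightarrow>
     (\<Prod>i\<in>{1..n}. g i) \<noteq> 0 \<and> (\<Sum>i\<in>{1..n}. f i * (\<Prod>j\<in>{1..n} - {i}. g j)) = 0 \<and>
     Gcd (f ` {1..n} \<union> g ` {1..n}) = 1"
  (is "(?f, ?g) \<in> B n \<longleftrightarrow> _")
proof -
  have "(\<Prod>i\<in>{1..n}. ?g i) = (\<Prod>i\<in>{1..n}. g i)" by (rule prod.cong) auto
  moreover have "(\<Sum>i\<in>{1..n}. ?f i * (\<Prod>j\<in>{1..n} - {i}. ?g j))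
      = (\<Sum>i\<in>{1..n}. f i * (\<Prod>j\<in>{1..n} - {i}. g j))"
    by (intro sum.cong refl arg_cong2[where f = times] prod.cong) auto
  moreover have "?f ` {1..n} \<union> ?g ` {1..n} = f ` {1..n} \<union> g ` {1..n}" by auto
  ultimately show ?thesis unfolding B_def by simp
qed

lemma phi_mem_B:
  assumes n: "1 \<le> n" and pre: "A0_pre n x' z" and gcd: "A0_gcd n x' z"
  shows "phi n (x', z) \<in> B n"
proof -
  have z: "admissible n z" using pre by (simp add: A0_pre_iff)
  have "(\<Prod>i\<in>{1..n}. ycoord n z i) \<noteq> 0" using ycoord_nonzero[OF z] by simp
  moreover have "(\<Sum>i\<in>{1..n}. (z (2^(i-1)) * x' i) * (\<Prod>j\<in>{1..n} - {i}. ycoord n z j)) = 0"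
    using pre cleared_equation_iff[OF z, of x'] unfolding A0_pre_iff by blast
  moreover have "Gcd ((\<lambda>i. z (2^(i-1)) * x' i) ` {1..n} \<union> ycoord n z ` {1..n}) = 1"
    using gcd A0_gcd_iff[OF n z] by simp
  ultimately show ?thesis unfolding phi_eq restricted_mem_B_iff by blast
qed

lemma phi_inj_on: "inj_on (phi n) (A0 n)"
proof (rule inj_onI, clarify)
  fix x' z x'' w
  assume "(x', z) \<in> A0 n" "(x'', w) \<in> A0 n" and eq: "phi n (x', z) = phi n (x'', w)"
  then have pre: "A0_pre n x' z" "A0_pre n x'' w" by (simp_all add: A0_def)
  then have z: "admissible n z" and w: "admissible n w" by (simp_all add: A0_pre_iff)
  have eq_i: "z (2^(i-1)) * x' i = w (2^(i-1)) * x'' i" "ycoord n z i = ycoord n w i"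
    if "i \<in> {1..n}" for i
    using eq that unfolding phi_eq by (auto dest: fun_cong[of _ _ i])
  then have "z = w" using admissible_ycoord_inj[OF z w] by blast
  moreover have "x' i = x'' i" for i
  proof (cases "i \<in> {1..n}")
    case True
    have "z (2^(i-1)) \<noteq> 0" using z pow2_mem[OF True] by (simp add: admissible_def)
    then show ?thesis using eq_i(1)[OF True] \<open>z = w\<close> by simp
  qed (use pre in \<open>simp add: A0_pre_iff\<close>)
  ultimately show "x' = x'' \<and> z = w" by auto
qed

lemma B_subset_phi_image:
  assumes n: "1 \<le> n"
  shows "B n \<subseteq> phi n ` A0 n"
proof (clarify)
  fix x y assume xy: "(x, y) \<in> B n"
  have outside: "\<And>i. i \<notin> {1..n} \<Longrightarrow> x i = 0 \<and> y i = 0"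
    and "(\<Prod>i\<in>{1..n}. y i) \<noteq> 0"
    and sum_zero: "(\<Sum>i\<in>{1..n}. x i * (\<Prod>j\<in>{1..n} - {i}. y j)) = 0"
    and gcd: "Gcd (x ` {1..n} \<union> y ` {1..n}) = 1"
    using xy by (auto simp: B_def)
  then have "\<And>i. i \<in> {1..n} \<Longrightarrow> y i \<noteq> 0" by auto
  then obtain z where z: "admissible n z" and y: "\<And>i. i \<in> {1..n} \<Longrightarrow> ycoord n z i = y i"
    using admissible_ycoord_surj[where n = n and y = y] by blast
  have prod_y: "(\<Prod>j\<in>{1..n} - {i}. ycoord n z j) = (\<Prod>j\<in>{1..n} - {i}. y j)" for i
    using y by (intro prod.cong) auto
  have "(\<Sum>k\<in>{1..n}. x k * (\<Prod>j\<in>{1..n} - {k}. ycoord n z j)) = 0"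
    using sum_zero by (simp only: prod_y)
  then obtain x' where x'_outside: "\<And>i. i \<notin> {1..n} \<Longrightarrow> x' i = 0"
    and x: "\<And>i. i \<in> {1..n} \<Longrightarrow> z (2^(i-1)) * x' i = x i"
    using admissible_divides_xcoords[OF z] by blast
  have "phi n (x', z) = (x, y)"
    unfolding phi_eq using x y outside by (auto simp: fun_eq_iff)
  moreover have "A0_pre n x' z"
  proof -
    have "(\<Sum>i\<in>{1..n}. (z (2^(i-1)) * x' i) * (\<Prod>j\<in>{1..n} - {i}. ycoord n z j))
        = (\<Sum>i\<in>{1..n}. x i * (\<Prod>j\<in>{1..n} - {i}. y j))"
      using x prod_y by (intro sum.cong refl) simp
    then have "(\<Sum>i\<in>{1..n}. (z (2^(i-1)) * x' i) * (\<Prod>j\<in>{1..n} - {i}. ycoord n z j)) = 0"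
      using sum_zero by simp
    then show ?thesis
      unfolding A0_pre_iff using x'_outside z cleared_equation_iff[OF z, of x'] by blast
  qed
  moreover have "A0_gcd n x' z"
  proof -
    have "(\<lambda>i. z (2^(i-1)) * x' i) ` {1..n} = x ` {1..n}" by (rule image_cong[OF refl x])
    moreover have "ycoord n z ` {1..n} = y ` {1..n}" by (rule image_cong[OF refl y])
    ultimately show ?thesis using gcd A0_gcd_iff[OF n z, of x'] by simp
  qed
  ultimately show "(x, y) \<in> phi n ` A0 n" by (force simp: A0_def)
qed

theorem proposition5:
  fixes n :: nat
  assumes "n \<ge> 3"
  shows "bij_betw (phi n) (A0 n) (B n) \<and>
    (\<forall>x' z. A0_pre n x' z \<longrightarrow>
       (A0_gcd n x' z \<longleftrightarrow>
          Gcd (fst (phi n (x', z)) ` {1..n} \<union> snd (phi n (x', z)) ` {1..n}) = 1))"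
proof
  have n: "1 \<le> n" using assms by simp
  have "phi n ` A0 n \<subseteq> B n" using phi_mem_B[OF n] by (auto simp: A0_def)
  then show "bij_betw (phi n) (A0 n) (B n)"
    using phi_inj_on B_subset_phi_image[OF n] by (auto simp: bij_betw_def)
  show "\<forall>x' z. A0_pre n x' z \<longrightarrow> (A0_gcd n x' z \<longleftrightarrow>
          Gcd (fst (phi n (x', z)) ` {1..n} \<union> snd (phi n (x', z)) ` {1..n}) = 1)"
    unfolding image_phi using A0_gcd_iff[OF n] A0_pre_iff by blast
qed

end
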